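(* Let $q \in (0,1)$ and $k > 1$ be fixed, and let $t = k/q$ (assumed to be a positive integer). Let $n$ be even with $n \ge 2k/q$, and let $S_l = (u_1,\dots,u_{n/2})$ and $S_r = (v_1,\dots,v_{n/2})$ be the two halves of the span list. Suppose the meshability relation between spans of $S_l$ and spans of $S_r$ is random such that each pair $(u_i, v_j)$ is meshable with probability $q$, and for every collection of pairs forming an acyclic graph (a forest) on $S_l \cup S_r$, the corresponding meshability events are mutually independent. Run the procedure SplitMesher with parameter $t$. Then, with probability tending to $1$ as $n \to \infty$, SplitMesher finds a matching (a set of pairwise disjoint meshable pairs, each pair consisting of one span of $S_l$ and one of $S_r$) of size at least $n(1-e^{-2k})/4$.
   Context: Procedure SplitMesher$(S,t)$: given a randomly ordered list $S$ of $n$ spans, split it into $S_l = S[1:n/2]$ and $S_r = S[n/2+1:n]$. For $i = 0,1,\dots,t-1$: for $j = 0,1,\dots,\mathrm{len}-1$ where $\mathrm{len}=|S_l|$: if $S_l(j)$ and $S_r((j+i) \bmod \mathrm{len})$ are meshable, remove both from their respective lists and mesh them together (i.e. record them as a matched pair). Thus each span of $S_l$ is compared against at most $t$ spans of $S_r$, in cyclic offset order, and a span is never matched twice. Two spans are \emph{meshable} iff their occupancy bitstrings $s_1,s_2\in\{0,1\}^b$ satisfy $\sum_i s_1(i)s_2(i)=0$. *)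

theory Defs
  imports "HOL-Probability.Probability"
begin

text \<open>Spans: left half S_l indexed 0..<m, right half S_r indexed 0..<m (m = n/2).
  A meshability relation is a set R of pairs (i,j): the i-th span of S_l and the
  j-th span of S_r are meshable.\<close>

definition sm_step :: "(nat \<times> nat) set \<Rightarrow> nat \<times> nat \<Rightarrow> (nat \<times> nat) list \<Rightarrow> (nat \<times> nat) list" where
  "sm_step R p M =
     (if fst p \<notin> fst ` set M \<and> snd p \<notin> snd ` set M \<and> p \<in> R then p # M else M)"

definition split_mesher :: "(nat \<times> nat) set \<Rightarrow> nat \<Rightarrow> nat \<Rightarrow> (nat \<times> nat) list" where
  "split_mesher R m t =
     fold (sm_step R) [(j, (j + i) mod m). i \<leftarrow> [0..<t], j \<leftarrow> [0..<m]] []"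

definition is_matching :: "(nat \<times> nat) set \<Rightarrow> nat \<Rightarrow> (nat \<times> nat) set \<Rightarrow> bool" where
  "is_matching R m M \<longleftrightarrow> M \<subseteq> R \<inter> ({..<m} \<times> {..<m}) \<and> inj_on fst M \<and> inj_on snd M"

definition bip_has_cycle :: "(nat \<times> nat) set \<Rightarrow> bool" where
  "bip_has_cycle F \<longleftrightarrow> (\<exists>(r::nat) (a::nat\<Rightarrow>nat) (b::nat\<Rightarrow>nat). r \<ge> 2 \<and> inj_on a {..<r} \<and> inj_on b {..<r} \<and>
      (\<forall>s<r. (a s, b s) \<in> F \<and> (a ((s + 1) mod r), b s) \<in> F))"

definition bip_forest :: "(nat \<times> nat) set \<Rightarrow> bool" where
  "bip_forest F \<longleftrightarrow> \<not> bip_has_cycle F"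

end

theory Submission
  imports Defs
begin

text \<open>Say that left span \<open>j\<close> has a clean hit in round \<open>i < t\<close> if its candidate
  \<open>(j + i) mod m\<close> is the first meshable one among \<open>(j + a) mod m\<close>, \<open>a \<le> i\<close>, and none of the
  left spans \<open>j + 1, \<dots>, j + i\<close> (the ones SplitMesher compares with that right span before
  \<open>j\<close>) meshes with it; then SplitMesher matches \<open>j\<close>. The edges involved form a star, so by
  forest independence the event has probability \<open>q (1 - q)^(2i)\<close>, and these events are disjoint
  in \<open>i\<close>. Hence \<open>j\<close> has a clean hit with probability \<open>\<pi> = \<Sum>\<^bsub>i<t\<^esub> q (1 - q)^(2i)\<close>, which
  exceeds \<open>(1 - exp (-2k)) / 2\<close> since \<open>q t = k\<close>. If the windows \<open>{j, \<dots>, j + t - 1}\<close> of two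
  left spans are disjoint, their stars are vertex-disjoint, their union is again a forest and
  the two clean-hit events are independent. Only \<open>m t\<^sup>2\<close> ordered pairs of windows overlap, so the
  number of left spans with a clean hit has second moment at most \<open>m t\<^sup>2\<close> about its mean
  \<open>m \<pi>\<close>, and by Chebyshev it is at least \<open>m (1 - exp (-2k)) / 2 = n (1 - exp (-2k)) / 4\<close>
  with probability \<open>1 - O(1/m)\<close>.\<close>

section \<open>SplitMesher\<close>

lemma add_mod_cancel_right: "(a + c) mod m = (b + c) mod m \<Longrightarrow> a mod m = b mod (m::nat)"
  by (simp add: nat_mod_eq_iff)

lemma inj_on_add_mod: "inj_on (\<lambda>s. (j + s) mod m) {..<m :: nat}"
proof (rule inj_onI)
  fix a b assume "a \<in> {..<m}" "b \<in> {..<m}" "(j + a) mod m = (j + b) mod m"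
  then have "a mod m = b mod m" using add_mod_cancel_right[of a j m b] by (simp add: add.commute)
  with \<open>a \<in> {..<m}\<close> \<open>b \<in> {..<m}\<close> show "a = b" by simp
qed

lemma inj_on_add_mod_subset: "S \<subseteq> {..<m} \<Longrightarrow> inj_on (\<lambda>s. (j + s) mod m) (S :: nat set)"
  by (rule inj_on_subset[OF inj_on_add_mod])

lemma add_mod_ne_self:
  assumes "j < m" "0 < s" "s < (m::nat)"
  shows "(j + s) mod m \<noteq> j"
proof
  assume "(j + s) mod m = j"
  with assms(1) have "(j + s) mod m = (j + 0) mod m" by simp
  then have "s = 0" by (rule inj_onD[OF inj_on_add_mod]) (use assms in auto)
  with assms(2) show False by simp
qed

definition comparisons :: "nat \<Rightarrow> nat \<Rightarrow> (nat \<times> nat) list" where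
  "comparisons m t = [(j, (j + i) mod m). i \<leftarrow> [0..<t], j \<leftarrow> [0..<m]]"

lemma split_mesher_eq_fold: "split_mesher R m t = fold (sm_step R) (comparisons m t) []"
  by (simp add: split_mesher_def comparisons_def)

lemma set_fold_sm_step_mono: "set M \<subseteq> set (fold (sm_step R) xs M)"
proof (induction xs arbitrary: M)
  case (Cons x xs)
  have "set M \<subseteq> set (sm_step R x M)" by (auto simp: sm_step_def)
  with Cons.IH show ?case by fastforce
qed simp

lemma set_fold_sm_step_subset: "set (fold (sm_step R) xs M) \<subseteq> set M \<union> (set xs \<inter> R)"
proof (induction xs arbitrary: M)
  case (Cons x xs)
  have "set (sm_step R x M) \<subseteq> set M \<union> ({x} \<inter> R)" by (auto simp: sm_step_def)
  with Cons.IH show ?case by fastforce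
qed simp

lemma inj_on_fold_sm_step:
  assumes "inj_on fst (set M)" "inj_on snd (set M)"
  shows "inj_on fst (set (fold (sm_step R) xs M)) \<and> inj_on snd (set (fold (sm_step R) xs M))"
  using assms
proof (induction xs arbitrary: M)
  case (Cons x xs)
  have "inj_on fst (set (sm_step R x M))" "inj_on snd (set (sm_step R x M))"
    using Cons.prems by (auto simp: sm_step_def inj_on_def image_iff)
  with Cons.IH show ?case by simp
qed simp

lemma split_mesher_is_matching:
  assumes "0 < m"
  shows "is_matching R m (set (split_mesher R m t))"
proof -
  have "set (comparisons m t) \<subseteq> {..<m} \<times> {..<m}"
    using assms by (auto simp: comparisons_def)
  moreover have "set (split_mesher R m t) \<subseteq> set (comparisons m t) \<inter> R"
    using set_fold_sm_step_subset[of R "comparisons m t" "[]"] by (simp add: split_mesher_eq_fold)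
  moreover have "inj_on fst (set (split_mesher R m t)) \<and> inj_on snd (set (split_mesher R m t))"
    unfolding split_mesher_eq_fold by (rule inj_on_fold_sm_step) simp_all
  ultimately show ?thesis
    unfolding is_matching_def by blast
qed

text \<open>A meshable comparison leaves its left span matched (now or earlier) unless its right span
  was taken before; that can only happen through an earlier meshable comparison with it.\<close>
lemma fst_in_fold_sm_step:
  assumes "p \<in> R" and "\<And>p'. p' \<in> set ys \<Longrightarrow> snd p' = snd p \<Longrightarrow> p' \<notin> R"
  shows "fst p \<in> fst ` set (fold (sm_step R) (ys @ p # zs) [])"
proof -
  define M where "M = fold (sm_step R) ys []"
  have "snd p \<notin> snd ` set M"
    using set_fold_sm_step_subset[of R ys "[]"] assms(2) by (fastforce simp: M_def)
  then have "fst p \<in> fst ` set (sm_step R p M)"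
    using assms(1) by (auto simp: sm_step_def)
  moreover have "set (sm_step R p M) \<subseteq> set (fold (sm_step R) (ys @ p # zs) [])"
    using set_fold_sm_step_mono by (simp add: M_def)
  ultimately show ?thesis by blast
qed

lemma comparisons_split:
  assumes "i < t" "j < m"
  obtains ys zs where "comparisons m t = ys @ (j, (j + i) mod m) # zs"
    and "\<And>a. (a, (j + i) mod m) \<in> set ys \<Longrightarrow> \<exists>s\<in>{1..i}. a = (j + s) mod m"
proof
  have rounds: "[0..<t] = [0..<i] @ i # [Suc i..<t]"
    using assms(1) upt_add_eq_append[of 0 i "t - i"] upt_conv_Cons[of i t] by simp
  have positions: "[0..<m] = [0..<j] @ j # [Suc j..<m]"
    using assms(2) upt_add_eq_append[of 0 j "m - j"] upt_conv_Cons[of j m] by simp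
  define ys where "ys = [(j', (j' + i') mod m). i' \<leftarrow> [0..<i], j' \<leftarrow> [0..<m]]
    @ [(j', (j' + i) mod m). j' \<leftarrow> [0..<j]]"
  show "comparisons m t = ys @ (j, (j + i) mod m) # ([(j', (j' + i) mod m). j' \<leftarrow> [Suc j..<m]]
    @ [(j', (j' + i') mod m). i' \<leftarrow> [Suc i..<t], j' \<leftarrow> [0..<m]])"
  proof -
    have "comparisons m t = [(j', (j' + i') mod m). i' \<leftarrow> [0..<i], j' \<leftarrow> [0..<m]]
      @ [(j', (j' + i) mod m). j' \<leftarrow> [0..<m]]
      @ [(j', (j' + i') mod m). i' \<leftarrow> [Suc i..<t], j' \<leftarrow> [0..<m]]"
      unfolding comparisons_def by (subst rounds) simp
    also have "[(j', (j' + i) mod m). j' \<leftarrow> [0..<m]] = [(j', (j' + i) mod m). j' \<leftarrow> [0..<j]]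
      @ (j, (j + i) mod m) # [(j', (j' + i) mod m). j' \<leftarrow> [Suc j..<m]]"
      by (subst positions) simp
    finally show ?thesis by (simp add: ys_def)
  qed
  fix a assume "(a, (j + i) mod m) \<in> set ys"
  then consider (earlier_round) i' where "i' < i" "a < m" "(a + i') mod m = (j + i) mod m"
    | (same_round) "a < j" "(a + i) mod m = (j + i) mod m"
    by (auto simp: ys_def)
  then show "\<exists>s\<in>{1..i}. a = (j + s) mod m"
  proof cases
    case earlier_round
    then have "(a + i') mod m = (j + (i - i') + i') mod m" by simp
    then have "a = (j + (i - i')) mod m"
      using add_mod_cancel_right earlier_round(2) by (metis mod_less)
    then show ?thesis using earlier_round(1) by (intro bexI[of _ "i - i'"]) auto
  next
    case same_round
    then show ?thesis using assms(2) add_mod_cancel_right[of a i m j] by simp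
  qed
qed

lemma split_mesher_matches_left:
  assumes "j < m" "i < t" "(j, (j + i) mod m) \<in> R"
    and "\<And>s. s \<in> {1..i} \<Longrightarrow> ((j + s) mod m, (j + i) mod m) \<notin> R"
  shows "j \<in> fst ` set (split_mesher R m t)"
proof -
  obtain ys zs where split: "comparisons m t = ys @ (j, (j + i) mod m) # zs"
    and rivals: "\<And>a. (a, (j + i) mod m) \<in> set ys \<Longrightarrow> \<exists>s\<in>{1..i}. a = (j + s) mod m"
    using comparisons_split[OF assms(2,1)] by blast
  have "fst (j, (j + i) mod m) \<in> fst ` set (fold (sm_step R) (ys @ (j, (j + i) mod m) # zs) [])"
    by (rule fst_in_fold_sm_step[OF assms(3)]) (use rivals assms(4) in fastforce)
  then show ?thesis by (simp add: split_mesher_eq_fold split)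
qed

section \<open>Bipartite forests\<close>

lemma bip_forest_star:
  assumes "\<And>e. e \<in> F \<Longrightarrow> fst e = a0 \<or> snd e = b0"
  shows "bip_forest F"
  unfolding bip_forest_def bip_has_cycle_def
proof clarify
  fix r :: nat and a b :: "nat \<Rightarrow> nat"
  assume r: "2 \<le> r" and inj_a: "inj_on a {..<r}" and inj_b: "inj_on b {..<r}"
    and cycle: "\<forall>s<r. (a s, b s) \<in> F \<and> (a ((s + 1) mod r), b s) \<in> F"
  have "b s = b0" if s: "s < r" for s
  proof (rule ccontr)
    assume "b s \<noteq> b0"
    moreover have "(a s, b s) \<in> F" "(a ((s + 1) mod r), b s) \<in> F"
      using cycle s by simp_all
    ultimately have "a s = a0" "a ((s + 1) mod r) = a0"
      using assms by fastforce+
    moreover have "(s + 1) mod r \<noteq> s" "(s + 1) mod r < r"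
      using r s by (auto simp: mod_if)
    ultimately show False
      using inj_a s by (metis inj_onD lessThan_iff)
  qed
  then have "b 0 = b 1" using r by simp
  then show False
    using inj_b r by (auto dest: inj_onD)
qed

lemma closed_walk_in_component:
  fixes r :: nat
  assumes walk: "\<forall>s<r. (a s, b s) \<in> F1 \<union> F2 \<and> (a ((s + 1) mod r), b s) \<in> F1 \<union> F2"
    and F1: "F1 \<subseteq> A1 \<times> B1" and F2: "F2 \<subseteq> A2 \<times> B2"
    and disj: "A1 \<inter> A2 = {}" "B1 \<inter> B2 = {}" and start: "a 0 \<in> A1"
  shows "\<forall>s<r. (a s, b s) \<in> F1 \<and> (a ((s + 1) mod r), b s) \<in> F1"
proof -
  have step: "(a s, b s) \<in> F1 \<and> (a ((s + 1) mod r), b s) \<in> F1"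
    if "s < r" "a s \<in> A1" for s
  proof -
    have "(a s, b s) \<notin> F2" using that(2) F2 disj(1) by blast
    then have "(a s, b s) \<in> F1" using walk that(1) by blast
    then have "(a ((s + 1) mod r), b s) \<notin> F2" using F1 F2 disj(2) by blast
    with \<open>(a s, b s) \<in> F1\<close> show ?thesis using walk that(1) by blast
  qed
  have "s < r \<longrightarrow> a s \<in> A1" for s
  proof (induction s)
    case (Suc s)
    show ?case
    proof
      assume "Suc s < r"
      with Suc.IH have "s < r" "a s \<in> A1" by simp_all
      then have "a ((s + 1) mod r) \<in> A1" using step F1 by blast
      with \<open>Suc s < r\<close> show "a (Suc s) \<in> A1" by simp
    qed
  qed (use start in simp)
  with step show ?thesis by blast
qed

lemma bip_forest_Un:
  assumes "bip_forest F1" "bip_forest F2"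
    and F1: "F1 \<subseteq> A1 \<times> B1" and F2: "F2 \<subseteq> A2 \<times> B2"
    and disj: "A1 \<inter> A2 = {}" "B1 \<inter> B2 = {}"
  shows "bip_forest (F1 \<union> F2)"
  unfolding bip_forest_def bip_has_cycle_def
proof clarify
  fix r :: nat and a b :: "nat \<Rightarrow> nat"
  assume r: "2 \<le> r" and inj: "inj_on a {..<r}" "inj_on b {..<r}"
    and walk: "\<forall>s<r. (a s, b s) \<in> F1 \<union> F2 \<and> (a ((s + 1) mod r), b s) \<in> F1 \<union> F2"
  have "(a 0, b 0) \<in> F1 \<union> F2" using walk r by simp
  then consider "a 0 \<in> A1" | "a 0 \<in> A2" using F1 F2 by blast
  then show False
  proof cases
    case 1
    then have "\<forall>s<r. (a s, b s) \<in> F1 \<and> (a ((s + 1) mod r), b s) \<in> F1"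
      by (rule closed_walk_in_component[OF walk F1 F2 disj])
    with r inj have "bip_has_cycle F1"
      unfolding bip_has_cycle_def by (intro exI[of _ r] exI[of _ a] exI[of _ b]) simp
    with \<open>bip_forest F1\<close> show False
      unfolding bip_forest_def by simp
  next
    case 2
    have walk': "\<forall>s<r. (a s, b s) \<in> F2 \<union> F1 \<and> (a ((s + 1) mod r), b s) \<in> F2 \<union> F1"
      using walk by (simp add: Un_commute)
    have disj': "A2 \<inter> A1 = {}" "B2 \<inter> B1 = {}" using disj by blast+
    from 2 have "\<forall>s<r. (a s, b s) \<in> F2 \<and> (a ((s + 1) mod r), b s) \<in> F2"
      by (rule closed_walk_in_component[OF walk' F2 F1 disj'])
    with r inj have "bip_has_cycle F2"
      unfolding bip_has_cycle_def by (intro exI[of _ r] exI[of _ a] exI[of _ b]) simp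
    with \<open>bip_forest F2\<close> show False
      unfolding bip_forest_def by simp
  qed
qed

section \<open>Probability of edge patterns and second moments\<close>

lemma prob_present_absent:
  fixes p :: "'e set pmf"
  assumes indep: "prob_space.indep_events (measure_pmf p) (\<lambda>e. {R. e \<in> R}) F"
    and prob_e: "\<And>e. e \<in> F \<Longrightarrow> measure_pmf.prob p {R. e \<in> R} = q"
    and "finite F" "Pos \<subseteq> F" "Neg \<subseteq> F" "Pos \<inter> Neg = {}"
  shows "measure_pmf.prob p {R. Pos \<subseteq> R \<and> Neg \<inter> R = {}} = q ^ card Pos * (1 - q) ^ card Neg"
proof -
  have present: "measure_pmf.prob p {R. Pos \<subseteq> R} = q ^ card Pos" if "Pos \<subseteq> F" for Pos
  proof (cases "Pos = {}")
    case False
    have "finite Pos" using that \<open>finite F\<close> by (rule finite_subset)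
    have "measure_pmf.prob p (\<Inter>e\<in>Pos. {R. e \<in> R}) = (\<Prod>e\<in>Pos. measure_pmf.prob p {R. e \<in> R})"
      using indep that False \<open>finite Pos\<close>
      unfolding prob_space.indep_events_def[OF prob_space_measure_pmf] by simp
    also have "\<dots> = (\<Prod>e\<in>Pos. q)"
      using prob_e that by (intro prod.cong) auto
    also have "\<dots> = q ^ card Pos"
      by simp
    also have "(\<Inter>e\<in>Pos. {R. e \<in> R}) = {R. Pos \<subseteq> R}"
      using False by auto
    finally show ?thesis .
  qed simp
  have "finite Neg" using \<open>Neg \<subseteq> F\<close> \<open>finite F\<close> by (rule finite_subset)
  then show ?thesis
    using assms(4-6)
  proof (induction Neg arbitrary: Pos rule: finite_induct)
    case (insert e Neg)
    have "finite Pos" "e \<notin> Pos" "e \<in> F"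
      using insert.prems \<open>finite F\<close> finite_subset by auto
    have split: "{R. Pos \<subseteq> R \<and> insert e Neg \<inter> R = {}} =
        {R. Pos \<subseteq> R \<and> Neg \<inter> R = {}} - {R. insert e Pos \<subseteq> R \<and> Neg \<inter> R = {}}"
      by auto
    have "measure_pmf.prob p {R. Pos \<subseteq> R \<and> insert e Neg \<inter> R = {}} =
        measure_pmf.prob p {R. Pos \<subseteq> R \<and> Neg \<inter> R = {}}
        - measure_pmf.prob p {R. insert e Pos \<subseteq> R \<and> Neg \<inter> R = {}}"
      unfolding split by (rule measure_pmf.finite_measure_Diff) auto
    also have "measure_pmf.prob p {R. Pos \<subseteq> R \<and> Neg \<inter> R = {}} = q ^ card Pos * (1 - q) ^ card Neg"
      using insert.prems by (intro insert.IH) auto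
    also have "measure_pmf.prob p {R. insert e Pos \<subseteq> R \<and> Neg \<inter> R = {}}
        = q ^ Suc (card Pos) * (1 - q) ^ card Neg"
      using insert.prems insert.hyps \<open>finite Pos\<close> \<open>e \<notin> Pos\<close> \<open>e \<in> F\<close>
      by (subst insert.IH) auto
    finally show ?case
      using insert.hyps by (simp add: algebra_simps)
  qed (use present in simp)
qed

lemma integrable_measure_pmf_bounded:
  fixes f :: "'a \<Rightarrow> real"
  assumes "\<And>x. \<bar>f x\<bar> \<le> B"
  shows "integrable (measure_pmf p) f"
  using assms by (intro measure_pmf.integrable_const_bound[where B = B]) auto

lemma expectation_indicator_covariance:
  fixes p :: "'a pmf"
  shows "measure_pmf.expectation p (\<lambda>x. (indicator A x - c) * (indicator B x - c) :: real)
    = measure_pmf.prob p (A \<inter> B) - c * measure_pmf.prob p A - c * measure_pmf.prob p B + c * c"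
proof -
  have "(indicator A x - c) * (indicator B x - c) =
      indicator (A \<inter> B) x - c * indicator A x - c * indicator B x + c * c" for x :: 'a
    by (simp add: indicator_def algebra_simps)
  moreover have "integrable (measure_pmf p) (indicator S :: 'a \<Rightarrow> real)" for S
    by (rule integrable_measure_pmf_bounded[where B = 1]) (simp add: indicator_def)
  ultimately show ?thesis
    by (simp add: Bochner_Integration.integral_add Bochner_Integration.integral_diff)
qed

lemma expectation_sq_sum_indicators_le:
  fixes p :: "'a pmf" and A :: "'i \<Rightarrow> 'a set" and close :: "'i \<Rightarrow> 'i \<Rightarrow> bool"
  assumes "finite J"
    and prob_A: "\<And>j. j \<in> J \<Longrightarrow> measure_pmf.prob p (A j) = \<pi>"
    and far: "\<And>j j'. j \<in> J \<Longrightarrow> j' \<in> J \<Longrightarrow> \<not> close j j' \<Longrightarrow>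
      measure_pmf.prob p (A j \<inter> A j') = \<pi> * \<pi>"
  shows "measure_pmf.expectation p (\<lambda>x. ((\<Sum>j\<in>J. indicator (A j) x) - real (card J) * \<pi>)\<^sup>2)
    \<le> real (card {(j, j') \<in> J \<times> J. close j j'})"
proof -
  define Y where "Y j j' x = (indicator (A j) x - \<pi>) * (indicator (A j') x - \<pi>)" for j j' x
  have square: "((\<Sum>j\<in>J. indicator (A j) x) - real (card J) * \<pi>)\<^sup>2 = (\<Sum>j\<in>J. \<Sum>j'\<in>J. Y j j' x)"
    for x
  proof -
    have "(\<Sum>j\<in>J. indicator (A j) x) - real (card J) * \<pi> = (\<Sum>j\<in>J. indicator (A j) x - \<pi>)"
      by (simp add: sum_subtractf)
    then show ?thesis by (simp add: Y_def power2_eq_square sum_product)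
  qed
  have integrable: "integrable (measure_pmf p) (Y j j')" for j j'
  proof (rule integrable_measure_pmf_bounded[where B = "(1 + \<bar>\<pi>\<bar>) * (1 + \<bar>\<pi>\<bar>)"])
    have "\<bar>indicator S x - \<pi>\<bar> \<le> 1 + \<bar>\<pi>\<bar>" for S and x :: 'a
      by (auto simp: indicator_def abs_le_iff)
    then show "\<bar>Y j j' x\<bar> \<le> (1 + \<bar>\<pi>\<bar>) * (1 + \<bar>\<pi>\<bar>)" for x
      unfolding Y_def abs_mult by (intro mult_mono) auto
  qed
  have covariance: "measure_pmf.expectation p (Y j j') \<le> (if close j j' then 1 else 0)"
    if "j \<in> J" "j' \<in> J" for j j'
  proof -
    have "measure_pmf.expectation p (Y j j') = measure_pmf.prob p (A j \<inter> A j') - \<pi> * \<pi>"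
      using prob_A that unfolding Y_def expectation_indicator_covariance by simp
    moreover have "measure_pmf.prob p (A j \<inter> A j') - \<pi> * \<pi> \<le> 1"
      using measure_pmf.prob_le_1[of p "A j \<inter> A j'"] zero_le_square[of \<pi>] by linarith
    ultimately show ?thesis
      using far that by auto
  qed
  have "measure_pmf.expectation p (\<lambda>x. ((\<Sum>j\<in>J. indicator (A j) x) - real (card J) * \<pi>)\<^sup>2)
      = (\<Sum>j\<in>J. \<Sum>j'\<in>J. measure_pmf.expectation p (Y j j'))"
    unfolding square using integrable by (simp add: Bochner_Integration.integral_sum)
  also have "\<dots> \<le> (\<Sum>j\<in>J. \<Sum>j'\<in>J. if close j j' then 1 else 0)"
    by (intro sum_mono covariance)
  also have "\<dots> = (\<Sum>jj\<in>J \<times> J. if case_prod close jj then 1 else 0)"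
    by (simp add: sum.cartesian_product case_prod_beta)
  also have "\<dots> = real (card {jj \<in> J \<times> J. case_prod close jj})"
    using \<open>finite J\<close> by (simp add: sum.inter_filter[symmetric])
  also have "{jj \<in> J \<times> J. case_prod close jj} = {(j, j') \<in> J \<times> J. close j j'}"
    by auto
  finally show ?thesis .
qed

lemma prob_less_le_second_moment:
  fixes p :: "'a pmf" and X :: "'a \<Rightarrow> real"
  assumes "\<beta> < \<mu>" and bounded: "\<And>x. \<bar>X x\<bar> \<le> B"
  shows "measure_pmf.prob p {x. X x < \<beta>} \<le> measure_pmf.expectation p (\<lambda>x. (X x - \<mu>)\<^sup>2) / (\<mu> - \<beta>)\<^sup>2"
proof -
  have "integrable (measure_pmf p) (\<lambda>x. (X x - \<mu>) ^ 2)"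
  proof (rule integrable_measure_pmf_bounded[where B = "(B + \<bar>\<mu>\<bar>)\<^sup>2"])
    fix x
    have "\<bar>X x - \<mu>\<bar> \<le> B + \<bar>\<mu>\<bar>" using bounded[of x] by linarith
    then show "\<bar>(X x - \<mu>)\<^sup>2\<bar> \<le> (B + \<bar>\<mu>\<bar>)\<^sup>2"
      by (simp add: abs_le_square_iff[symmetric])
  qed
  then have "measure_pmf.prob p {x. \<bar>X x - \<mu>\<bar> \<ge> \<mu> - \<beta>} \<le>
      measure_pmf.expectation p (\<lambda>x. (X x - \<mu>)\<^sup>2) / (\<mu> - \<beta>)\<^sup>2"
    using measure_pmf.second_moment_method[of "\<lambda>x. X x - \<mu>" p "\<mu> - \<beta>"] assms(1) by simp
  moreover have "measure_pmf.prob p {x. X x < \<beta>} \<le> measure_pmf.prob p {x. \<bar>X x - \<mu>\<bar> \<ge> \<mu> - \<beta>}"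
    by (rule measure_pmf.finite_measure_mono) auto
  ultimately show ?thesis by linarith
qed

section \<open>Clean hits\<close>

definition window :: "nat \<Rightarrow> nat \<Rightarrow> nat \<Rightarrow> nat set" where
  "window m t j = (\<lambda>s. (j + s) mod m) ` {..<t}"

definition earlier_partners :: "nat \<Rightarrow> nat \<Rightarrow> nat \<Rightarrow> (nat \<times> nat) set" where
  "earlier_partners m j i = (\<lambda>a. (j, (j + a) mod m)) ` {..<i}"

definition rivals :: "nat \<Rightarrow> nat \<Rightarrow> nat \<Rightarrow> (nat \<times> nat) set" where
  "rivals m j i = (\<lambda>s. ((j + s) mod m, (j + i) mod m)) ` {1..i}"

definition blockers :: "nat \<Rightarrow> nat \<Rightarrow> nat \<Rightarrow> (nat \<times> nat) set" where
  "blockers m j i = earlier_partners m j i \<union> rivals m j i"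

definition clean_hit :: "nat \<Rightarrow> nat \<Rightarrow> nat \<Rightarrow> (nat \<times> nat) set set" where
  "clean_hit m j i = {R. (j, (j + i) mod m) \<in> R \<and> blockers m j i \<inter> R = {}}"

definition has_clean_hit :: "nat \<Rightarrow> nat \<Rightarrow> nat \<Rightarrow> (nat \<times> nat) set set" where
  "has_clean_hit m t j = (\<Union>i<t. clean_hit m j i)"

definition hit_prob :: "real \<Rightarrow> nat \<Rightarrow> real" where
  "hit_prob q t = (\<Sum>i<t. q * (1 - q) ^ (2 * i))"

lemma finite_earlier_partners: "finite (earlier_partners m j i)"
  by (simp add: earlier_partners_def)

lemma finite_rivals: "finite (rivals m j i)"
  by (simp add: rivals_def)

lemma finite_blockers: "finite (blockers m j i)"
  by (simp add: blockers_def finite_earlier_partners finite_rivals)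

lemma card_earlier_partners: "i \<le> m \<Longrightarrow> card (earlier_partners m j i) = i"
  unfolding earlier_partners_def
  using inj_on_add_mod_subset[of "{..<i}" m j] by (subst card_image) (auto simp: inj_on_def)

lemma card_rivals:
  assumes "i < m"
  shows "card (rivals m j i) = i"
proof -
  have "inj_on (\<lambda>s. (j + s) mod m) {1..i}"
    using assms by (intro inj_on_add_mod_subset) auto
  then have "inj_on (\<lambda>s. ((j + s) mod m, (j + i) mod m)) {1..i}"
    unfolding inj_on_def by blast
  then show ?thesis
    unfolding rivals_def by (simp add: card_image)
qed

lemma earlier_partners_rivals_disjoint:
  assumes "j < m" "i < m"
  shows "earlier_partners m j i \<inter> rivals m j i = {}"
proof -
  have "fst ` earlier_partners m j i \<subseteq> {j}"
    by (auto simp: earlier_partners_def)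
  moreover have "j \<notin> fst ` rivals m j i"
  proof
    assume "j \<in> fst ` rivals m j i"
    then obtain s where "s \<in> {1..i}" "(j + s) mod m = j"
      unfolding rivals_def by force
    with add_mod_ne_self[OF assms(1)] assms(2) show False by simp
  qed
  ultimately show ?thesis by blast
qed

lemma card_blockers:
  assumes "j < m" "i < m"
  shows "card (blockers m j i) = 2 * i"
  using card_Un_disjoint[OF finite_earlier_partners finite_rivals
      earlier_partners_rivals_disjoint[OF assms]] card_earlier_partners card_rivals assms
  by (simp add: blockers_def)

lemma hit_notin_blockers:
  assumes "j < m" "i < m"
  shows "(j, (j + i) mod m) \<notin> blockers m j i"
proof -
  have "(j + a) mod m \<noteq> (j + i) mod m" if "a < i" for a
  proof
    assume "(j + a) mod m = (j + i) mod m"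
    then have "a = i" by (rule inj_onD[OF inj_on_add_mod]) (use that assms in auto)
    with that show False by simp
  qed
  moreover have "(j + s) mod m \<noteq> j" if "s \<in> {1..i}" for s
    using add_mod_ne_self that assms by auto
  ultimately show ?thesis
    unfolding blockers_def earlier_partners_def rivals_def by fastforce
qed

lemma bip_forest_insert_hit_blockers:
  "bip_forest (insert (j, (j + i) mod m) (blockers m j i))"
  by (rule bip_forest_star[of _ j "(j + i) mod m"]) (auto simp: blockers_def earlier_partners_def rivals_def)

lemma insert_hit_blockers_subset_window:
  assumes "j < m" "i < t"
  shows "insert (j, (j + i) mod m) (blockers m j i) \<subseteq> window m t j \<times> window m t j"
proof -
  have "(j + s) mod m \<in> window m t j" if "s \<le> i" for s
    using that assms(2) by (auto simp: window_def)
  from this[of 0] this[of i] this show ?thesis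
    using assms(1) by (auto simp: blockers_def earlier_partners_def rivals_def)
qed

lemma window_subset: "0 < m \<Longrightarrow> window m t j \<subseteq> {..<m}"
  by (auto simp: window_def)

lemma clean_hit_disjoint: "i \<noteq> i' \<Longrightarrow> clean_hit m j i \<inter> clean_hit m j i' = {}"
proof (induction i i' rule: linorder_wlog)
  case (le i i')
  then have "(j, (j + i) mod m) \<in> earlier_partners m j i'"
    by (auto simp: earlier_partners_def)
  then show ?case by (auto simp: clean_hit_def blockers_def)
qed (simp add: Int_commute)

lemma overlapping_windows_subset:
  assumes "t \<le> m"
  shows "{j' \<in> {..<m}. window m t j \<inter> window m t j' \<noteq> {}}
    \<subseteq> (\<lambda>(s, s'). (j + s + (m - s')) mod m) ` ({..<t} \<times> {..<t})"
proof
  fix j' assume "j' \<in> {j' \<in> {..<m}. window m t j \<inter> window m t j' \<noteq> {}}"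
  then obtain s s' where "j' < m" "s < t" "s' < t" and eq: "(j + s) mod m = (j' + s') mod m"
    by (auto simp: window_def)
  have "j' = (j' + s' + (m - s')) mod m"
    using \<open>j' < m\<close> \<open>s' < t\<close> assms by simp
  also have "\<dots> = ((j' + s') mod m + (m - s')) mod m"
    by (simp add: mod_add_left_eq)
  also have "\<dots> = (j + s + (m - s')) mod m"
    by (simp add: eq[symmetric] mod_add_left_eq)
  finally show "j' \<in> (\<lambda>(s, s'). (j + s + (m - s')) mod m) ` ({..<t} \<times> {..<t})"
    using \<open>s < t\<close> \<open>s' < t\<close> by force
qed

lemma card_overlapping_windows:
  assumes "t \<le> m"
  shows "card {j' \<in> {..<m}. window m t j \<inter> window m t j' \<noteq> {}} \<le> t * t"
proof -
  have "card {j' \<in> {..<m}. window m t j \<inter> window m t j' \<noteq> {}}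
      \<le> card ((\<lambda>(s, s'). (j + s + (m - s')) mod m) ` ({..<t} \<times> {..<t}))"
    by (rule card_mono[OF _ overlapping_windows_subset[OF assms]]) simp
  also have "\<dots> \<le> card ({..<t} \<times> {..<t})"
    by (rule card_image_le) simp
  finally show ?thesis by (simp add: card_cartesian_product)
qed

lemma card_has_clean_hit_le_card_split_mesher:
  "card {j \<in> {..<m}. R \<in> has_clean_hit m t j} \<le> card (set (split_mesher R m t))"
proof -
  have "{j \<in> {..<m}. R \<in> has_clean_hit m t j} \<subseteq> fst ` set (split_mesher R m t)"
  proof clarify
    fix j assume "j < m" "R \<in> has_clean_hit m t j"
    then obtain i where "i < t" and hit: "R \<in> clean_hit m j i"
      by (auto simp: has_clean_hit_def)
    have "((j + s) mod m, (j + i) mod m) \<notin> R" if "s \<in> {1..i}" for s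
    proof -
      have "((j + s) mod m, (j + i) mod m) \<in> rivals m j i"
        using that by (auto simp: rivals_def)
      with hit show ?thesis by (auto simp: clean_hit_def blockers_def)
    qed
    with \<open>j < m\<close> \<open>i < t\<close> hit show "j \<in> fst ` set (split_mesher R m t)"
      by (intro split_mesher_matches_left) (auto simp: clean_hit_def)
  qed
  then have "card {j \<in> {..<m}. R \<in> has_clean_hit m t j} \<le> card (fst ` set (split_mesher R m t))"
    by (intro card_mono) auto
  also have "\<dots> \<le> card (set (split_mesher R m t))"
    by (rule card_image_le) simp
  finally show ?thesis .
qed

lemma hit_prob_gt:
  fixes q :: real
  assumes "0 < q" "q < 1" "0 < t"
  shows "(1 - exp (- 2 * q * real t)) / 2 < hit_prob q t"
proof -
  define x where "x = (1 - q)\<^sup>2"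
  have "x \<noteq> 1" and one_minus_x: "1 - x = q * (2 - q)"
    using assms by (auto simp: x_def power2_eq_square algebra_simps)
  have "hit_prob q t = q * (\<Sum>i<t. x ^ i)"
    by (simp add: hit_prob_def x_def sum_distrib_left power_mult)
  also have "\<dots> = (1 - x ^ t) / (2 - q)"
    using \<open>x \<noteq> 1\<close> assms by (simp add: sum_gp_strict one_minus_x)
  finally have hit_prob_eq: "hit_prob q t = (1 - x ^ t) / (2 - q)" .
  have "x ^ t = (1 - q) ^ (2 * t)"
    by (simp add: x_def power_mult)
  also have "\<dots> \<le> exp (- q) ^ (2 * t)"
    using exp_ge_add_one_self[of "- q"] assms by (intro power_mono) auto
  also have "\<dots> = exp (- 2 * q * real t)"
    by (simp add: exp_of_nat_mult[symmetric] algebra_simps)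
  finally have "x ^ t \<le> exp (- 2 * q * real t)" .
  have "exp (- 2 * q * real t) < 1"
    using assms by simp
  then have "(1 - exp (- 2 * q * real t)) / 2 < (1 - exp (- 2 * q * real t)) / (2 - q)"
    using assms by (intro divide_strict_left_mono) auto
  also have "\<dots> \<le> (1 - x ^ t) / (2 - q)"
    using \<open>x ^ t \<le> exp (- 2 * q * real t)\<close> assms by (intro divide_right_mono) auto
  finally show ?thesis
    unfolding hit_prob_eq .
qed

locale forest_independent_meshing =
  fixes p :: "(nat \<times> nat) set pmf" and q :: real and m t :: nat
  assumes prob_edge: "\<And>i j. i < m \<Longrightarrow> j < m \<Longrightarrow> measure_pmf.prob p {R. (i, j) \<in> R} = q"
    and indep_forest: "\<And>F. F \<subseteq> {..<m} \<times> {..<m} \<Longrightarrow> bip_forest F \<Longrightarrow>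
      prob_space.indep_events (measure_pmf p) (\<lambda>e. {R. e \<in> R}) F"
    and t_pos: "0 < t" and t_le_m: "t \<le> m"
begin

lemma prob_forest_pattern:
  assumes "F \<subseteq> {..<m} \<times> {..<m}" "bip_forest F" "finite F"
    and "Pos \<subseteq> F" "Neg \<subseteq> F" "Pos \<inter> Neg = {}"
  shows "measure_pmf.prob p {R. Pos \<subseteq> R \<and> Neg \<inter> R = {}} = q ^ card Pos * (1 - q) ^ card Neg"
proof (rule prob_present_absent[OF indep_forest[OF assms(1,2)] _ assms(3-6)])
  fix e assume "e \<in> F"
  with assms(1) show "measure_pmf.prob p {R. e \<in> R} = q"
    using prob_edge by (cases e) auto
qed

lemma insert_hit_blockers_subset:
  assumes "j < m" "i < t"
  shows "insert (j, (j + i) mod m) (blockers m j i) \<subseteq> {..<m} \<times> {..<m}"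
proof -
  have "window m t j \<subseteq> {..<m}"
    using assms(1) by (intro window_subset) simp
  then show ?thesis
    using insert_hit_blockers_subset_window[OF assms] by blast
qed

lemma prob_clean_hit:
  assumes "j < m" "i < t"
  shows "measure_pmf.prob p (clean_hit m j i) = q * (1 - q) ^ (2 * i)"
proof -
  have "i < m" using assms t_le_m by simp
  have "measure_pmf.prob p {R. {(j, (j + i) mod m)} \<subseteq> R \<and> blockers m j i \<inter> R = {}}
      = q ^ card {(j, (j + i) mod m)} * (1 - q) ^ card (blockers m j i)"
    using hit_notin_blockers[OF assms(1) \<open>i < m\<close>]
    by (intro prob_forest_pattern[OF insert_hit_blockers_subset[OF assms] bip_forest_insert_hit_blockers])
      (auto simp: finite_blockers)
  then show ?thesis
    using card_blockers[OF assms(1) \<open>i < m\<close>] by (simp add: clean_hit_def)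
qed

lemma prob_clean_hit_Int:
  assumes "j < m" "j' < m" "i < t" "i' < t" and far: "window m t j \<inter> window m t j' = {}"
  shows "measure_pmf.prob p (clean_hit m j i \<inter> clean_hit m j' i') =
    q * (1 - q) ^ (2 * i) * (q * (1 - q) ^ (2 * i'))"
proof -
  define h h' where "h = (j, (j + i) mod m)" and "h' = (j', (j' + i') mod m)"
  define B B' where "B = blockers m j i"
    and "B' = blockers m j' i'"
  have "i < m" "i' < m" using assms t_le_m by simp_all
  have sub: "insert h B \<subseteq> window m t j \<times> window m t j" "insert h' B' \<subseteq> window m t j' \<times> window m t j'"
    unfolding h_def h'_def B_def B'_def using insert_hit_blockers_subset_window assms by blast+
  then have disj: "insert h B \<inter> insert h' B' = {}" using far by blast
  have "bip_forest (insert h B)" "bip_forest (insert h' B')"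
    unfolding h_def h'_def B_def B'_def by (rule bip_forest_insert_hit_blockers)+
  then have "bip_forest (insert h B \<union> insert h' B')"
    using sub far by (intro bip_forest_Un)
  moreover have "insert h B \<union> insert h' B' \<subseteq> {..<m} \<times> {..<m}"
    unfolding h_def h'_def B_def B'_def using insert_hit_blockers_subset assms by blast
  moreover have "h \<notin> B" "h' \<notin> B'"
    unfolding h_def h'_def B_def B'_def using hit_notin_blockers assms \<open>i < m\<close> \<open>i' < m\<close>
    by blast+
  ultimately have "measure_pmf.prob p {R. {h, h'} \<subseteq> R \<and> (B \<union> B') \<inter> R = {}}
      = q ^ card {h, h'} * (1 - q) ^ card (B \<union> B')"
    using disj by (intro prob_forest_pattern) (auto simp: B_def B'_def finite_blockers)
  moreover have "card {h, h'} = 2" "card (B \<union> B') = 2 * i + 2 * i'"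
    using disj card_Un_disjoint[of B B'] card_blockers assms \<open>i < m\<close> \<open>i' < m\<close>
    by (auto simp: B_def B'_def finite_blockers)
  moreover have "{R. {h, h'} \<subseteq> R \<and> (B \<union> B') \<inter> R = {}} = clean_hit m j i \<inter> clean_hit m j' i'"
    by (auto simp: clean_hit_def h_def h'_def B_def B'_def)
  ultimately show ?thesis
    by (simp add: power_add algebra_simps power2_eq_square)
qed

lemma prob_has_clean_hit:
  assumes "j < m"
  shows "measure_pmf.prob p (has_clean_hit m t j) = hit_prob q t"
proof -
  have "measure_pmf.prob p (has_clean_hit m t j) = (\<Sum>i<t. measure_pmf.prob p (clean_hit m j i))"
    unfolding has_clean_hit_def
    by (rule measure_pmf.finite_measure_finite_Union) (auto simp: disjoint_family_on_def clean_hit_disjoint)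
  also have "\<dots> = hit_prob q t"
    using prob_clean_hit assms by (simp add: hit_prob_def)
  finally show ?thesis .
qed

lemma prob_has_clean_hit_Int:
  assumes "j < m" "j' < m" and far: "window m t j \<inter> window m t j' = {}"
  shows "measure_pmf.prob p (has_clean_hit m t j \<inter> has_clean_hit m t j') = hit_prob q t * hit_prob q t"
proof -
  have "has_clean_hit m t j \<inter> has_clean_hit m t j' =
      (\<Union>ii\<in>{..<t} \<times> {..<t}. clean_hit m j (fst ii) \<inter> clean_hit m j' (snd ii))"
    by (auto simp: has_clean_hit_def)
  moreover have "disjoint_family_on (\<lambda>ii. clean_hit m j (fst ii) \<inter> clean_hit m j' (snd ii))
      ({..<t} \<times> {..<t})"
    unfolding disjoint_family_on_def using clean_hit_disjoint by (fastforce simp: prod_eq_iff)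
  ultimately have "measure_pmf.prob p (has_clean_hit m t j \<inter> has_clean_hit m t j') =
      (\<Sum>ii\<in>{..<t} \<times> {..<t}. measure_pmf.prob p (clean_hit m j (fst ii) \<inter> clean_hit m j' (snd ii)))"
    by (simp add: measure_pmf.finite_measure_finite_Union)
  also have "\<dots> = (\<Sum>ii\<in>{..<t} \<times> {..<t}. q * (1 - q) ^ (2 * fst ii) * (q * (1 - q) ^ (2 * snd ii)))"
    using assms by (intro sum.cong) (auto simp: prob_clean_hit_Int)
  also have "\<dots> = hit_prob q t * hit_prob q t"
    by (simp add: hit_prob_def sum_product sum.cartesian_product case_prod_beta)
  finally show ?thesis .
qed

lemma prob_few_clean_hits:
  assumes "\<beta> < hit_prob q t"
  shows "measure_pmf.prob p {R. real (card {j \<in> {..<m}. R \<in> has_clean_hit m t j}) < \<beta> * m}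
    \<le> real t * real t / ((hit_prob q t - \<beta>)\<^sup>2 * real m)"
proof -
  define X where "X R = (\<Sum>j<m. indicator (has_clean_hit m t j) R :: real)" for R
  define close where "close j j' \<longleftrightarrow> window m t j \<inter> window m t j' \<noteq> {}" for j j'
  have "0 < m" using t_pos t_le_m by simp
  have count: "X R = real (card {j \<in> {..<m}. R \<in> has_clean_hit m t j})" for R
    unfolding X_def indicator_def by (simp add: sum.inter_filter[symmetric] Int_def)
  have "{(j, j') \<in> {..<m} \<times> {..<m}. close j j'} = (SIGMA j:{..<m}. {j' \<in> {..<m}. close j j'})"
    by auto
  then have "card {(j, j') \<in> {..<m} \<times> {..<m}. close j j'} = (\<Sum>j<m. card {j' \<in> {..<m}. close j j'})"
    by (simp add: card_SigmaI)
  also have "\<dots> \<le> (\<Sum>j<m. t * t)"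
    unfolding close_def by (intro sum_mono card_overlapping_windows t_le_m)
  finally have close_pairs: "card {(j, j') \<in> {..<m} \<times> {..<m}. close j j'} \<le> m * (t * t)" by simp
  have "measure_pmf.prob p {R. X R < \<beta> * m}
      \<le> measure_pmf.expectation p (\<lambda>R. (X R - real m * hit_prob q t)\<^sup>2)
        / (real m * hit_prob q t - \<beta> * m)\<^sup>2"
  proof (rule prob_less_le_second_moment[where B = m])
    show "\<beta> * m < real m * hit_prob q t" using assms \<open>0 < m\<close> by simp
    have "card {j \<in> {..<m}. R \<in> has_clean_hit m t j} \<le> card {..<m}" for R
      by (rule card_mono) auto
    then show "\<bar>X R\<bar> \<le> real m" for R
      by (simp add: count)
  qed
  also have "\<dots> \<le> real (m * (t * t)) / (real m * hit_prob q t - \<beta> * m)\<^sup>2"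
  proof (rule divide_right_mono)
    have "measure_pmf.expectation p (\<lambda>R. (X R - real (card {..<m}) * hit_prob q t)\<^sup>2)
        \<le> real (card {(j, j') \<in> {..<m} \<times> {..<m}. close j j'})"
      unfolding X_def using prob_has_clean_hit prob_has_clean_hit_Int
      by (intro expectation_sq_sum_indicators_le) (auto simp: close_def)
    then show "measure_pmf.expectation p (\<lambda>R. (X R - real m * hit_prob q t)\<^sup>2) \<le> real (m * (t * t))"
      using close_pairs unfolding card_lessThan by (meson of_nat_le_iff order_trans)
  qed simp
  also have "\<dots> = real t * real t / ((hit_prob q t - \<beta>)\<^sup>2 * real m)"
  proof -
    have "real m * hit_prob q t - \<beta> * m = (hit_prob q t - \<beta>) * m"
      by (simp add: algebra_simps)
    then show ?thesis
      using \<open>0 < m\<close> by (simp add: power_mult_distrib power2_eq_square)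
  qed
  finally show ?thesis by (simp add: count)
qed

lemma prob_large_matching:
  assumes "\<beta> < hit_prob q t"
  shows "1 - real t * real t / ((hit_prob q t - \<beta>)\<^sup>2 * real m) \<le> measure_pmf.prob p
    {R. is_matching R m (set (split_mesher R m t)) \<and> \<beta> * m \<le> real (card (set (split_mesher R m t)))}"
proof -
  let ?few = "{R. real (card {j \<in> {..<m}. R \<in> has_clean_hit m t j}) < \<beta> * m}"
  let ?good = "{R. is_matching R m (set (split_mesher R m t)) \<and> \<beta> * m \<le> real (card (set (split_mesher R m t)))}"
  have "R \<in> ?good" if "R \<notin> ?few" for R
  proof -
    have "\<beta> * m \<le> card {j \<in> {..<m}. R \<in> has_clean_hit m t j}"
      using that by simp
    also have "\<dots> \<le> card (set (split_mesher R m t))"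
      using card_has_clean_hit_le_card_split_mesher by simp
    finally show ?thesis
      using split_mesher_is_matching[of m R t] t_pos t_le_m by simp
  qed
  then have "measure_pmf.prob p (UNIV - ?few) \<le> measure_pmf.prob p ?good"
    by (intro measure_pmf.finite_measure_mono) auto
  then show ?thesis
    using prob_few_clean_hits[OF assms] measure_pmf.prob_compl[of ?few p] by simp
qed

end

theorem lemma5p1:
  fixes q k :: real and t :: nat
    and P :: "nat \<Rightarrow> (nat \<times> nat) set pmf"
  assumes q: "0 < q" "q < 1"
    and k: "k > 1"
    and t: "real t = k / q" "t > 0"
    and prob_edge: "\<And>m i j. real (2 * m) \<ge> 2 * k / q \<Longrightarrow> i < m \<Longrightarrow> j < m \<Longrightarrow>
              measure_pmf.prob (P m) {R. (i, j) \<in> R} = q"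
    and forest_indep: "\<And>m F. real (2 * m) \<ge> 2 * k / q \<Longrightarrow> F \<subseteq> {..<m} \<times> {..<m} \<Longrightarrow>
              bip_forest F \<Longrightarrow> prob_space.indep_events (measure_pmf (P m)) (\<lambda>e. {R. e \<in> R}) F"
  shows "(\<lambda>m. measure_pmf.prob (P m)
            {R. is_matching R m (set (split_mesher R m t)) \<and>
                real (card (set (split_mesher R m t))) \<ge> real (2 * m) * (1 - exp (- 2 * k)) / 4})
         \<longlonglongrightarrow> 1"
proof -
  define \<beta> where "\<beta> = (1 - exp (- 2 * k)) / 2"
  define C where "C = real t * real t / (hit_prob q t - \<beta>)\<^sup>2"
  define good where "good m = {R. is_matching R m (set (split_mesher R m t)) \<and>
    real (card (set (split_mesher R m t))) \<ge> real (2 * m) * (1 - exp (- 2 * k)) / 4}" for m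
  have "q * real t = k" using t(1) q by (simp add: field_simps)
  then have \<beta>_less: "\<beta> < hit_prob q t"
    using hit_prob_gt[OF q t(2)] by (simp add: \<beta>_def mult.assoc)
  have "1 - C / real m \<le> measure_pmf.prob (P m) (good m)" if "t \<le> m" for m
  proof -
    have admissible: "2 * k / q \<le> real (2 * m)" using that t(1) by simp
    interpret forest_independent_meshing "P m" q m t
      using prob_edge[OF admissible] forest_indep[OF admissible] t(2) that by unfold_locales auto
    have size: "real (2 * m) * (1 - exp (- 2 * k)) / 4 = \<beta> * m"
      by (simp add: \<beta>_def)
    have bound: "C / real m = real t * real t / ((hit_prob q t - \<beta>)\<^sup>2 * real m)"
      by (simp add: C_def)
    show ?thesis
      unfolding good_def size bound by (rule prob_large_matching[OF \<beta>_less])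
  qed
  then have "\<forall>\<^sub>F m in sequentially. 1 - C / real m \<le> measure_pmf.prob (P m) (good m)"
    by (intro eventually_sequentiallyI)
  moreover have "\<forall>\<^sub>F m in sequentially. measure_pmf.prob (P m) (good m) \<le> 1"
    by simp
  moreover have "(\<lambda>m. 1 - C / real m) \<longlonglongrightarrow> 1"
    using tendsto_diff[OF tendsto_const lim_const_over_n[of C]] by simp
  ultimately have "(\<lambda>m. measure_pmf.prob (P m) (good m)) \<longlonglongrightarrow> 1"
    by (rule tendsto_sandwich[OF _ _ _ tendsto_const])
  then show ?thesis
    unfolding good_def .
qed

end
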